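(* Let $f$ be a Lévy exponent with Lévy triplet $(\mu,\sigma^2,V)$ and let $0<p\le q\le 2$. Define $\mathcal{A}_{sym}=\emptyset$ if $V$ is symmetric and $\{1\}$ otherwise; $\mathcal{A}_1=\emptyset$ if $\mu=0$ and $\{1\}$ otherwise; $\mathcal{A}_2=\emptyset$ if $\sigma^2=0$ and $\{2\}$ otherwise; $\mathcal{A}=\{p,q\}\cup\mathcal{A}_{sym}\cup\mathcal{A}_1\cup\mathcal{A}_2$; $p_{\min}=\min\mathcal{A}$, $p_{\max}=\max\mathcal{A}$. If $V\in\mathscr{M}(p_{\min},p_{\max})$, then the functional $F(\varphi)=\int_{\mathbb{R}^d}f(\varphi(\mathbf{r}))\,\mathrm{d}\mathbf{r}$ is well defined on $L^{p_{\min}}(\mathbb{R}^d)\cap L^{p_{\max}}(\mathbb{R}^d)$, and there exist $\nu_1,\nu_2\ge0$ such that for all $\varphi,\psi\in L^{p_{\min}}\cap L^{p_{\max}}$, $$|F(\varphi)-F(\psi)|\le\nu_1H_{p_{\min}}(\varphi,\psi)+\nu_2H_{p_{\max}}(\varphi,\psi).$$ Consequently $F$ is continuous on $L^{p_{\min}}\cap L^{p_{\max}}$.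
   Context: A Lévy exponent with triplet $(\mu,\sigma^2,V)$ is $f(\omega)=\mathrm{j}\mu\omega-\frac{\sigma^2\omega^2}{2}+\int_{\mathbb{R}\setminus\{0\}}(\mathrm{e}^{\mathrm{j}a\omega}-1-\mathrm{j}\omega a\mathbb{1}_{|a|<1})V(\mathrm{d}a)$, $\mu\in\mathbb{R}$, $\sigma^2\ge0$, $V$ a Radon measure on $\mathbb{R}\setminus\{0\}$ with $\int\min(1,a^2)V(\mathrm{d}a)<\infty$; $V$ is symmetric if $V(B)=V(-B)$. $\mathscr{M}(p,q)$ is the set of Radon measures $V$ on $\mathbb{R}\setminus\{0\}$ with $\int_{0<|a|<1}|a|^qV(\mathrm{d}a)<\infty$ and $\int_{|a|\ge1}|a|^pV(\mathrm{d}a)<\infty$. $H_r(\varphi,\psi)=\sqrt{(\|\varphi\|_r^r+\|\psi\|_r^r)\|\varphi-\psi\|_r^r}$ with $\|\varphi\|_r^r=\int|\varphi|^r$. $L^r$ for $0<r<1$ is metrized by $d_r(f,g)=\int|f-g|^r$; the intersection carries the sum of the two metrics/norms. Functions are real-valued. *)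

theory Defs
  imports "HOL-Analysis.Analysis"
begin

text \<open>Local finiteness on R minus 0 (Radon) follows from the integrability condition.\<close>
definition levy_measure :: "real measure \<Rightarrow> bool" where
  "levy_measure V \<longleftrightarrow> sets V = sets borel \<and> emeasure V {0} = 0 \<and>
     (\<integral>\<^sup>+ a. ennreal (min 1 (a\<^sup>2)) \<partial>V) < \<infinity>"

definition levy_exponent :: "real \<Rightarrow> real \<Rightarrow> real measure \<Rightarrow> real \<Rightarrow> complex" where
  "levy_exponent \<mu> \<sigma>2 V \<omega> =
     \<i> * complex_of_real (\<mu> * \<omega>) - complex_of_real (\<sigma>2 * \<omega>\<^sup>2 / 2)
     + (\<integral>a. indicator (- {0}) a *\<^sub>R
          (exp (\<i> * complex_of_real (a * \<omega>)) - 1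
           - \<i> * complex_of_real (\<omega> * a * indicator {a. \<bar>a\<bar> < 1} a)) \<partial>V)"

definition symmetric_measure :: "real measure \<Rightarrow> bool" where
  "symmetric_measure V \<longleftrightarrow> (\<forall>B \<in> sets borel. emeasure V B = emeasure V (uminus ` B))"

definition levy_class :: "real \<Rightarrow> real \<Rightarrow> real measure set" where
  "levy_class p q = {V. sets V = sets borel \<and>
     (\<integral>\<^sup>+ a. ennreal (indicator {a. 0 < \<bar>a\<bar> \<and> \<bar>a\<bar> < 1} a * \<bar>a\<bar> powr q) \<partial>V) < \<infinity> \<and>
     (\<integral>\<^sup>+ a. ennreal (indicator {a. 1 \<le> \<bar>a\<bar>} a * \<bar>a\<bar> powr p) \<partial>V) < \<infinity>}"

definition Lr :: "real \<Rightarrow> ('a::euclidean_space \<Rightarrow> real) set" where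
  "Lr r = {\<phi>. \<phi> \<in> borel_measurable lborel \<and>
              (\<integral>\<^sup>+ x. ennreal (\<bar>\<phi> x\<bar> powr r) \<partial>lborel) < \<infinity>}"

definition norm_rr :: "real \<Rightarrow> ('a::euclidean_space \<Rightarrow> real) \<Rightarrow> real" where
  "norm_rr r \<phi> = (\<integral>x. \<bar>\<phi> x\<bar> powr r \<partial>lborel)"

definition H :: "real \<Rightarrow> ('a::euclidean_space \<Rightarrow> real) \<Rightarrow> ('a \<Rightarrow> real) \<Rightarrow> real" where
  "H r \<phi> \<psi> = sqrt ((norm_rr r \<phi> + norm_rr r \<psi>) * norm_rr r (\<lambda>x. \<phi> x - \<psi> x))"

definition Lr_dist :: "real \<Rightarrow> ('a::euclidean_space \<Rightarrow> real) \<Rightarrow> ('a \<Rightarrow> real) \<Rightarrow> real" where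
  "Lr_dist r \<phi> \<psi> = (if r < 1 then norm_rr r (\<lambda>x. \<phi> x - \<psi> x)
                      else norm_rr r (\<lambda>x. \<phi> x - \<psi> x) powr (1 / r))"

definition exps_A :: "real \<Rightarrow> real \<Rightarrow> real \<Rightarrow> real \<Rightarrow> real measure \<Rightarrow> real set" where
  "exps_A p q \<mu> \<sigma>2 V = {p, q} \<union> (if symmetric_measure V then {} else {1})
      \<union> (if \<mu> = 0 then {} else {1}) \<union> (if \<sigma>2 = 0 then {} else {2})"

definition p_min :: "real \<Rightarrow> real \<Rightarrow> real \<Rightarrow> real \<Rightarrow> real measure \<Rightarrow> real" where
  "p_min p q \<mu> \<sigma>2 V = Min (exps_A p q \<mu> \<sigma>2 V)"

definition p_max :: "real \<Rightarrow> real \<Rightarrow> real \<Rightarrow> real \<Rightarrow> real measure \<Rightarrow> real" where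
  "p_max p q \<mu> \<sigma>2 V = Max (exps_A p q \<mu> \<sigma>2 V)"

definition levy_functional :: "(real \<Rightarrow> complex) \<Rightarrow> ('a::euclidean_space \<Rightarrow> real) \<Rightarrow> complex" where
  "levy_functional f \<phi> = (\<integral>r. f (\<phi> r) \<partial>lborel)"

end

theory Submission
  imports Defs "HOL-Probability.Characteristic_Functions"
begin

text \<open>Everything reduces to the pointwise estimate
  \<open>|f x - f y| \<le> K (H_pointwise pmin x y + H_pointwise pmax x y)\<close>, where
  \<open>H_pointwise r x y = ((|x| + |y|) |x - y|)\<^bsup>r/2\<^esup>\<close> is the pointwise analogue of \<open>H r\<close>.
  The drift is controlled by \<open>H_pointwise 1\<close>, the Gaussian part by \<open>H_pointwise 2\<close>, and the
  jump integral by splitting \<open>V\<close> into large jumps (weighted by \<open>|a|\<^bsup>pmin\<^esup>\<close>) and small jumps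
  (weighted by \<open>|a|\<^bsup>pmax\<^esup>\<close>), using \<open>|e\<^bsup>it\<^esup> - 1| \<le> 2 min 1 |t|\<close> and
  \<open>|e\<^bsup>it\<^esup> - 1 - it| \<le> 2 |t| min 1 |t|\<close>; these force \<open>pmin \<le> 1 \<le> pmax\<close>.  For symmetric \<open>V\<close>
  the integrand may be replaced by \<open>cos (a\<omega>) - 1\<close>, which needs no compensator and therefore works
  for every exponent.  By Cauchy-Schwarz, \<open>\<integral> H_pointwise r (\<phi> x) (\<psi> x) dx \<le> 2 H r \<phi> \<psi>\<close>,
  which gives the Lipschitz-type bound; continuity follows since \<open>H r \<phi> \<psi>\<close> is small once
  \<open>\<integral> |\<phi> - \<psi>|\<^sup>r\<close> is.\<close>

lemma min_one_le_powr:
  fixes t s :: real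
  assumes "0 \<le> t" "0 \<le> s" "s \<le> 1"
  shows "min 1 t \<le> t powr s"
proof (cases "t \<le> 1")
  case True
  show ?thesis
  proof (cases "t = 0")
    case False
    then have "t powr 1 \<le> t powr s" using True assms by (intro powr_mono') auto
    then show ?thesis using False assms by simp
  qed simp
next
  case False
  then have "1 \<le> t powr s" using assms by (intro ge_one_powr_ge_zero) auto
  then show ?thesis by simp
qed

lemma add_powr_le:
  fixes a b r :: real
  assumes "0 \<le> a" "0 \<le> b" "0 < r" "r \<le> 2"
  shows "(a + b) powr r \<le> 4 * (a powr r + b powr r)"
proof -
  have "(a + b) powr r \<le> (2 * max a b) powr r"
    using assms by (intro powr_mono2) auto
  also have "\<dots> = 2 powr r * max a b powr r"
    using assms by (simp add: powr_mult)
  also have "\<dots> \<le> 4 * max a b powr r"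
  proof -
    have "2 powr r \<le> 2 powr 2" using assms by (intro powr_mono) auto
    then show ?thesis by (intro mult_right_mono) auto
  qed
  also have "\<dots> \<le> 4 * (a powr r + b powr r)"
    by (cases "a \<le> b") auto
  finally show ?thesis .
qed

lemma powr_le_powr_add_powr:
  fixes t a b c :: real
  assumes "0 \<le> t" "a \<le> c" "c \<le> b"
  shows "t powr c \<le> t powr a + t powr b"
proof (cases "t \<le> 1")
  case True
  then have "t powr c \<le> t powr a"
    using assms by (cases "t = 0") (auto intro: powr_mono')
  then show ?thesis using powr_ge_zero[of t b] powr_ge_zero[of t a] by linarith
next
  case False
  then have "t powr c \<le> t powr b" using assms by (intro powr_mono) auto
  then show ?thesis using powr_ge_zero[of t b] powr_ge_zero[of t a] by linarith
qed

lemma cmod_iexp_sub_one_le_abs: "cmod (iexp t - 1) \<le> \<bar>t\<bar>"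
  using iexp_approx1[of t 0] by simp

lemma cmod_iexp_sub_one_le: "cmod (iexp t - 1) \<le> 2 * min 1 \<bar>t\<bar>"
  using cmod_iexp_sub_one_le_abs[of t] iexp_approx2[of t 0] by (auto simp: min_def)

lemma cmod_iexp_sub_linear_le: "cmod (iexp t - 1 - \<i> * complex_of_real t) \<le> t\<^sup>2 / 2"
  using iexp_approx1[of t 1] by (simp add: power2_eq_square algebra_simps)

lemma cmod_iexp_sub_linear_le_min:
  "cmod (iexp t - 1 - \<i> * complex_of_real t) \<le> 2 * \<bar>t\<bar> * min 1 \<bar>t\<bar>"
proof (cases "\<bar>t\<bar> \<le> 1")
  case True
  have "t\<^sup>2 / 2 \<le> 2 * \<bar>t\<bar> * \<bar>t\<bar>" by (simp add: power2_eq_square abs_mult_self_eq)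
  then show ?thesis using cmod_iexp_sub_linear_le[of t] True by (simp add: min_def)
next
  case False
  have "cmod (iexp t - 1 - \<i> * complex_of_real t) \<le> cmod (iexp t - 1) + \<bar>t\<bar>"
    using norm_triangle_ineq4[of "iexp t - 1" "\<i> * complex_of_real t"] by (simp add: norm_mult)
  then show ?thesis using False cmod_iexp_sub_one_le_abs[of t] by (simp add: min_def)
qed

section \<open>The pointwise gauge\<close>

definition H_pointwise :: "real \<Rightarrow> real \<Rightarrow> real \<Rightarrow> real" where
  "H_pointwise r x y = ((\<bar>x\<bar> + \<bar>y\<bar>) * \<bar>x - y\<bar>) powr (r / 2)"

lemma H_pointwise_nonneg: "0 \<le> H_pointwise r x y"
  by (simp add: H_pointwise_def)

lemma H_pointwise_same [simp]: "H_pointwise r x x = 0"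
  by (simp add: H_pointwise_def)

lemma H_pointwise_zero_right: "H_pointwise r x 0 = \<bar>x\<bar> powr r"
proof -
  have "H_pointwise r x 0 = (\<bar>x\<bar> * \<bar>x\<bar>) powr (r/2)" by (simp add: H_pointwise_def)
  also have "\<dots> = \<bar>x\<bar> powr (r/2) * \<bar>x\<bar> powr (r/2)" by (rule powr_mult)
  also have "\<dots> = \<bar>x\<bar> powr r" by (simp add: powr_add[symmetric])
  finally show ?thesis .
qed

lemma H_pointwise_eq_sqrt:
  "H_pointwise r x y = sqrt ((\<bar>x\<bar> + \<bar>y\<bar>) powr r * \<bar>x - y\<bar> powr r)"
proof -
  have "H_pointwise r x y = (((\<bar>x\<bar> + \<bar>y\<bar>) * \<bar>x - y\<bar>) powr r) powr (1/2)"
    by (simp add: H_pointwise_def powr_powr)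
  also have "\<dots> = sqrt (((\<bar>x\<bar> + \<bar>y\<bar>) * \<bar>x - y\<bar>) powr r)" by (simp add: powr_half_sqrt)
  also have "\<dots> = sqrt ((\<bar>x\<bar> + \<bar>y\<bar>) powr r * \<bar>x - y\<bar> powr r)" by (subst powr_mult) auto
  finally show ?thesis .
qed

lemma continuous_on_H_pointwise: "0 < r \<Longrightarrow> continuous_on UNIV (\<lambda>x. H_pointwise r x y)"
  unfolding H_pointwise_def by (intro continuous_on_powr' continuous_intros) auto

lemma H_pointwise_le_add:
  "a \<le> c \<Longrightarrow> c \<le> b \<Longrightarrow> H_pointwise c x y \<le> H_pointwise a x y + H_pointwise b x y"
  unfolding H_pointwise_def by (intro powr_le_powr_add_powr) auto

lemma abs_diff_powr_le_H_pointwise: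
  assumes "0 \<le> r"
  shows "\<bar>x - y\<bar> powr r \<le> H_pointwise r x y"
proof -
  have "(\<bar>x - y\<bar> * \<bar>x - y\<bar>) powr (r/2) = \<bar>x - y\<bar> powr (r/2) * \<bar>x - y\<bar> powr (r/2)"
    by (rule powr_mult)
  then have "\<bar>x - y\<bar> powr r = (\<bar>x - y\<bar> * \<bar>x - y\<bar>) powr (r/2)"
    by (simp add: powr_add[symmetric])
  also have "\<dots> \<le> ((\<bar>x\<bar> + \<bar>y\<bar>) * \<bar>x - y\<bar>) powr (r/2)"
    using assms by (intro powr_mono2 mult_right_mono) auto
  finally show ?thesis by (simp add: H_pointwise_def)
qed

lemma abs_diff_le_H_pointwise_1: "\<bar>x - y\<bar> \<le> H_pointwise 1 x y"
  using abs_diff_powr_le_H_pointwise[of 1 x y] by simp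

lemma abs_diff_square_le_H_pointwise_2: "\<bar>x\<^sup>2 - y\<^sup>2\<bar> \<le> H_pointwise 2 x y"
proof -
  have "\<bar>x\<^sup>2 - y\<^sup>2\<bar> = \<bar>x + y\<bar> * \<bar>x - y\<bar>"
    by (simp add: power2_eq_square algebra_simps abs_mult[symmetric])
  also have "\<dots> \<le> (\<bar>x\<bar> + \<bar>y\<bar>) * \<bar>x - y\<bar>"
    by (intro mult_right_mono abs_triangle_ineq) auto
  finally show ?thesis by (simp add: H_pointwise_def)
qed

lemma abs_diff_mult_powr_le_H_pointwise:
  assumes "1 \<le> r" "r \<le> 2"
  shows "\<bar>x - y\<bar> * (\<bar>x\<bar> + \<bar>y\<bar>) powr (r - 1) \<le> H_pointwise r x y"
proof (cases "x = y")
  case False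
  define A where "A = \<bar>x\<bar> + \<bar>y\<bar>"
  define D where "D = \<bar>x - y\<bar>"
  have D: "0 < D" using False by (simp add: D_def)
  have DA: "D \<le> A" by (simp add: D_def A_def)
  have "D * A powr (r - 1) = D powr (r/2) * D powr (1 - r/2) * A powr (r - 1)"
    using D by (simp add: powr_add[symmetric])
  also have "\<dots> \<le> D powr (r/2) * A powr (1 - r/2) * A powr (r - 1)"
    using D DA assms by (intro mult_right_mono mult_left_mono powr_mono2) auto
  also have "\<dots> = (A * D) powr (r/2)"
    using D DA by (simp add: powr_mult mult_ac powr_add[symmetric])
  finally show ?thesis by (simp add: H_pointwise_def A_def D_def)
qed simp

lemma abs_cos_diff_le_H_pointwise:
  assumes "0 \<le> r" "r \<le> 2"
  shows "\<bar>cos (a * x) - cos (a * y)\<bar> \<le> 2 * \<bar>a\<bar> powr r * H_pointwise r x y"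
proof -
  define A where "A = \<bar>x\<bar> + \<bar>y\<bar>"
  define D where "D = \<bar>x - y\<bar>"
  have abs_sin: "\<bar>sin w\<bar> \<le> min 1 \<bar>w\<bar>" for w :: real
    using abs_sin_x_le_abs_x[of w] abs_sin_le_one[of w] by simp
  have "\<bar>(a*x + a*y)/2\<bar> \<le> \<bar>a\<bar> * A"
  proof -
    have "\<bar>(a*x + a*y)/2\<bar> \<le> \<bar>a\<bar> * \<bar>x + y\<bar>" by (simp add: abs_mult[symmetric] distrib_left)
    also have "\<dots> \<le> \<bar>a\<bar> * A" unfolding A_def by (intro mult_left_mono abs_triangle_ineq) auto
    finally show ?thesis .
  qed
  then have sin_sum: "\<bar>sin ((a*x + a*y)/2)\<bar> \<le> min 1 (\<bar>a\<bar> * A)"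
    using abs_sin[of "(a*x + a*y)/2"] by linarith
  have "\<bar>(a*y - a*x)/2\<bar> \<le> \<bar>a\<bar> * D"
    unfolding D_def by (simp add: right_diff_distrib[symmetric] abs_mult abs_minus_commute)
  then have sin_diff: "\<bar>sin ((a*y - a*x)/2)\<bar> \<le> min 1 (\<bar>a\<bar> * D)"
    using abs_sin[of "(a*y - a*x)/2"] by linarith
  have "\<bar>cos (a*x) - cos (a*y)\<bar> = 2 * \<bar>sin ((a*x + a*y)/2)\<bar> * \<bar>sin ((a*y - a*x)/2)\<bar>"
    by (simp add: cos_diff_cos abs_mult)
  also have "\<dots> \<le> 2 * min 1 (\<bar>a\<bar> * A) * min 1 (\<bar>a\<bar> * D)"
    using sin_sum sin_diff by (intro mult_mono mult_left_mono) auto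
  also have "\<dots> \<le> 2 * (\<bar>a\<bar> * A) powr (r/2) * (\<bar>a\<bar> * D) powr (r/2)"
    using assms by (intro mult_mono mult_left_mono min_one_le_powr) (auto simp: A_def D_def)
  also have "\<dots> = 2 * (\<bar>a\<bar> powr (r/2) * \<bar>a\<bar> powr (r/2)) * (A * D) powr (r/2)"
    by (simp add: powr_mult A_def D_def mult_ac)
  also have "\<dots> = 2 * \<bar>a\<bar> powr r * H_pointwise r x y"
    by (simp add: powr_add[symmetric] H_pointwise_def A_def D_def)
  finally show ?thesis .
qed

lemma cmod_iexp_diff_le_H_pointwise:
  assumes "0 \<le> r" "r \<le> 1"
  shows "cmod (iexp (a * x) - iexp (a * y)) \<le> 2 * \<bar>a\<bar> powr r * H_pointwise r x y"
proof -
  have "\<i> * complex_of_real (a*x) = \<i> * complex_of_real (a*y) + \<i> * complex_of_real (a*(x-y))"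
    by (simp add: right_diff_distrib ring_distribs)
  then have "iexp (a*x) = iexp (a*y) * iexp (a*(x-y))" by (simp add: exp_add[symmetric])
  then have "iexp (a*x) - iexp (a*y) = iexp (a*y) * (iexp (a*(x-y)) - 1)"
    by (simp add: right_diff_distrib)
  then have "cmod (iexp (a*x) - iexp (a*y)) = cmod (iexp (a*(x-y)) - 1)"
    by (simp add: norm_mult)
  also have "\<dots> \<le> 2 * min 1 \<bar>a*(x-y)\<bar>" by (rule cmod_iexp_sub_one_le)
  also have "\<dots> \<le> 2 * \<bar>a\<bar> powr r * \<bar>x - y\<bar> powr r"
    using assms min_one_le_powr[of "\<bar>a*(x-y)\<bar>" r] by (simp add: abs_mult powr_mult)
  also have "\<dots> \<le> 2 * \<bar>a\<bar> powr r * H_pointwise r x y"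
    using assms by (intro mult_left_mono abs_diff_powr_le_H_pointwise) auto
  finally show ?thesis .
qed

lemma cmod_iexp_diff_sub_linear_le_H_pointwise:
  assumes "1 \<le> r" "r \<le> 2"
  shows "cmod (iexp (a * x) - iexp (a * y) - \<i> * complex_of_real (a * (x - y)))
    \<le> 4 * \<bar>a\<bar> powr r * H_pointwise r x y"
proof -
  define d where "d = a * (x - y)"
  define v where "v = a * y"
  define W where "W = \<bar>a\<bar> * (\<bar>x\<bar> + \<bar>y\<bar>)"
  have "\<i> * complex_of_real (a*x) = \<i> * complex_of_real v + \<i> * complex_of_real d"
    by (simp add: d_def v_def right_diff_distrib ring_distribs)
  then have "iexp (a*x) = iexp v * iexp d" by (simp add: exp_add[symmetric])
  then have split: "iexp (a*x) - iexp (a*y) - \<i> * complex_of_real (a*(x-y))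
      = iexp v * (iexp d - 1 - \<i> * complex_of_real d) + \<i> * complex_of_real d * (iexp v - 1)"
    by (simp add: d_def v_def ring_distribs)
  have W: "0 \<le> W" by (simp add: W_def)
  have "\<bar>d\<bar> \<le> W" "\<bar>v\<bar> \<le> W"
    unfolding d_def v_def W_def abs_mult by (auto intro: mult_left_mono)
  then have min_d: "min 1 \<bar>d\<bar> \<le> W powr (r - 1)" and min_v: "min 1 \<bar>v\<bar> \<le> W powr (r - 1)"
    using min_one_le_powr[OF W, of "r - 1"] assms by auto
  have "cmod (iexp (a*x) - iexp (a*y) - \<i> * complex_of_real (a*(x-y)))
     \<le> cmod (iexp d - 1 - \<i> * complex_of_real d) + \<bar>d\<bar> * cmod (iexp v - 1)"
    unfolding split using norm_triangle_ineq[of "iexp v * (iexp d - 1 - \<i> * complex_of_real d)"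
        "\<i> * complex_of_real d * (iexp v - 1)"]
    by (simp add: norm_mult)
  also have "\<dots> \<le> 2 * \<bar>d\<bar> * min 1 \<bar>d\<bar> + \<bar>d\<bar> * (2 * min 1 \<bar>v\<bar>)"
    by (intro add_mono cmod_iexp_sub_linear_le_min mult_left_mono cmod_iexp_sub_one_le) auto
  also have "\<dots> \<le> 2 * \<bar>d\<bar> * W powr (r - 1) + \<bar>d\<bar> * (2 * W powr (r - 1))"
    using min_d min_v by (intro add_mono mult_left_mono) auto
  also have "\<dots> = 4 * (\<bar>a\<bar> * \<bar>a\<bar> powr (r - 1)) * (\<bar>x - y\<bar> * (\<bar>x\<bar> + \<bar>y\<bar>) powr (r - 1))"
    by (simp add: d_def W_def abs_mult powr_mult)
  also have "\<bar>a\<bar> * \<bar>a\<bar> powr (r - 1) = \<bar>a\<bar> powr r"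
    using powr_add[of "\<bar>a\<bar>" 1 "r - 1"] by (cases "a = 0") auto
  also have "4 * \<bar>a\<bar> powr r * (\<bar>x - y\<bar> * (\<bar>x\<bar> + \<bar>y\<bar>) powr (r - 1)) \<le> 4 * \<bar>a\<bar> powr r * H_pointwise r x y"
    using assms by (intro mult_left_mono abs_diff_mult_powr_le_H_pointwise) auto
  finally show ?thesis .
qed

section \<open>Integral estimates on \<open>L\<^sup>r\<close>\<close>

lemma Cauchy_Schwarz_integral_sqrt:
  fixes u w :: "'b \<Rightarrow> real"
  assumes u: "integrable M u" and w: "integrable M w"
    and u_nonneg: "\<And>x. 0 \<le> u x" and w_nonneg: "\<And>x. 0 \<le> w x"
  shows "integrable M (\<lambda>x. sqrt (u x * w x))"
    and "(\<integral>x. sqrt (u x * w x) \<partial>M) \<le> sqrt ((\<integral>x. u x \<partial>M) * (\<integral>x. w x \<partial>M))"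
proof -
  have [measurable]: "u \<in> borel_measurable M" "w \<in> borel_measurable M" using u w by auto
  have "sqrt (u x * w x) \<le> u x + w x" for x
  proof -
    have "u x * w x \<le> (u x + w x)\<^sup>2" using u_nonneg[of x] w_nonneg[of x]
      by (simp add: power2_eq_square algebra_simps)
    then show ?thesis using u_nonneg[of x] w_nonneg[of x] by (simp add: real_le_lsqrt)
  qed
  then show int: "integrable M (\<lambda>x. sqrt (u x * w x))"
    by (intro Bochner_Integration.integrable_bound[OF Bochner_Integration.integrable_add[OF u w]])
      (auto intro!: AE_I2 simp: u_nonneg w_nonneg)
  define I where "I = (\<integral>x. sqrt (u x * w x) \<partial>M)"
  have I: "0 \<le> I" unfolding I_def by (intro integral_nonneg_AE) (simp add: u_nonneg w_nonneg)
  have nn_sqrt_square: "(\<integral>\<^sup>+x. ennreal (sqrt (g x)) ^ 2 \<partial>M) = ennreal (\<integral>x. g x \<partial>M)"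
    if "integrable M g" "\<And>x. 0 \<le> g x" for g
    using that by (simp add: ennreal_power nn_integral_eq_integral)
  have "ennreal I = (\<integral>\<^sup>+x. ennreal (sqrt (u x * w x)) \<partial>M)"
    unfolding I_def by (rule nn_integral_eq_integral[symmetric, OF int]) (simp add: u_nonneg w_nonneg)
  also have "\<dots> = (\<integral>\<^sup>+x. ennreal (sqrt (u x)) * ennreal (sqrt (w x)) \<partial>M)"
    using u_nonneg w_nonneg by (simp add: real_sqrt_mult ennreal_mult)
  finally have I_nn: "ennreal I = (\<integral>\<^sup>+x. ennreal (sqrt (u x)) * ennreal (sqrt (w x)) \<partial>M)" .
  have "(ennreal I)\<^sup>2 \<le> ennreal (\<integral>x. u x \<partial>M) * ennreal (\<integral>x. w x \<partial>M)"
    unfolding I_nn nn_sqrt_square[OF u u_nonneg, symmetric] nn_sqrt_square[OF w w_nonneg, symmetric]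
    by (rule Cauchy_Schwarz_nn_integral) auto
  moreover have "0 \<le> (\<integral>x. u x \<partial>M)" "0 \<le> (\<integral>x. w x \<partial>M)"
    using u_nonneg w_nonneg by (auto intro: integral_nonneg_AE)
  ultimately have "I\<^sup>2 \<le> (\<integral>x. u x \<partial>M) * (\<integral>x. w x \<partial>M)"
    using I by (simp add: ennreal_power ennreal_mult[symmetric] ennreal_le_iff)
  then show "(\<integral>x. sqrt (u x * w x) \<partial>M) \<le> sqrt ((\<integral>x. u x \<partial>M) * (\<integral>x. w x \<partial>M))"
    unfolding I_def[symmetric] using I by (simp add: real_le_rsqrt)
qed

lemma Lr_measurable: "\<phi> \<in> Lr r \<Longrightarrow> \<phi> \<in> borel_measurable lborel"
  by (simp add: Lr_def)

lemma integrable_Lr_powr: "\<phi> \<in> Lr r \<Longrightarrow> integrable lborel (\<lambda>x. \<bar>\<phi> x\<bar> powr r)"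
  using Lr_measurable by (intro integrableI_bounded) (auto simp: Lr_def)

lemma norm_rr_nonneg: "0 \<le> norm_rr r \<phi>"
  unfolding norm_rr_def by (intro integral_nonneg_AE) auto

lemma
  fixes \<phi> \<psi> :: "'a::euclidean_space \<Rightarrow> real"
  assumes "\<phi> \<in> Lr r" "\<psi> \<in> Lr r" "0 < r" "r \<le> 2"
  shows integrable_Lr_add_abs_powr: "integrable lborel (\<lambda>x. (\<bar>\<phi> x\<bar> + \<bar>\<psi> x\<bar>) powr r)"
    and integral_Lr_add_abs_powr_le:
      "(\<integral>x. (\<bar>\<phi> x\<bar> + \<bar>\<psi> x\<bar>) powr r \<partial>lborel) \<le> 4 * (norm_rr r \<phi> + norm_rr r \<psi>)"
proof -
  note [measurable] = Lr_measurable[OF assms(1)] Lr_measurable[OF assms(2)]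
  have bound: "integrable lborel (\<lambda>x. 4 * (\<bar>\<phi> x\<bar> powr r + \<bar>\<psi> x\<bar> powr r))"
    using integrable_Lr_powr[OF assms(1)] integrable_Lr_powr[OF assms(2)] by auto
  have le: "(\<bar>\<phi> x\<bar> + \<bar>\<psi> x\<bar>) powr r \<le> 4 * (\<bar>\<phi> x\<bar> powr r + \<bar>\<psi> x\<bar> powr r)" for x
    using assms by (intro add_powr_le) auto
  show int: "integrable lborel (\<lambda>x. (\<bar>\<phi> x\<bar> + \<bar>\<psi> x\<bar>) powr r)"
    by (rule Bochner_Integration.integrable_bound[OF bound]) (use le in \<open>auto intro!: AE_I2\<close>)
  have "(\<integral>x. (\<bar>\<phi> x\<bar> + \<bar>\<psi> x\<bar>) powr r \<partial>lborel) \<le> (\<integral>x. 4 * (\<bar>\<phi> x\<bar> powr r + \<bar>\<psi> x\<bar> powr r) \<partial>lborel)"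
    by (rule integral_mono[OF int bound le])
  also have "\<dots> = 4 * (norm_rr r \<phi> + norm_rr r \<psi>)"
    using integrable_Lr_powr[OF assms(1)] integrable_Lr_powr[OF assms(2)] by (simp add: norm_rr_def)
  finally show "(\<integral>x. (\<bar>\<phi> x\<bar> + \<bar>\<psi> x\<bar>) powr r \<partial>lborel) \<le> 4 * (norm_rr r \<phi> + norm_rr r \<psi>)" .
qed

lemma integrable_Lr_diff_powr:
  fixes \<phi> \<psi> :: "'a::euclidean_space \<Rightarrow> real"
  assumes "\<phi> \<in> Lr r" "\<psi> \<in> Lr r" "0 < r" "r \<le> 2"
  shows "integrable lborel (\<lambda>x. \<bar>\<phi> x - \<psi> x\<bar> powr r)"
proof -
  note [measurable] = Lr_measurable[OF assms(1)] Lr_measurable[OF assms(2)]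
  show ?thesis
    by (rule Bochner_Integration.integrable_bound[OF integrable_Lr_add_abs_powr[OF assms]])
      (use assms in \<open>auto intro!: AE_I2 powr_mono2\<close>)
qed

lemma
  fixes \<phi> \<psi> :: "'a::euclidean_space \<Rightarrow> real"
  assumes "\<phi> \<in> Lr r" "\<psi> \<in> Lr r" "0 < r" "r \<le> 2"
  shows integrable_H_pointwise: "integrable lborel (\<lambda>x. H_pointwise r (\<phi> x) (\<psi> x))"
    and integral_H_pointwise_le: "(\<integral>x. H_pointwise r (\<phi> x) (\<psi> x) \<partial>lborel) \<le> 2 * H r \<phi> \<psi>"
proof -
  note CS = Cauchy_Schwarz_integral_sqrt[OF integrable_Lr_add_abs_powr[OF assms]
      integrable_Lr_diff_powr[OF assms] powr_ge_zero powr_ge_zero]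
  show "integrable lborel (\<lambda>x. H_pointwise r (\<phi> x) (\<psi> x))"
    unfolding H_pointwise_eq_sqrt by (rule CS(1))
  have "(\<integral>x. H_pointwise r (\<phi> x) (\<psi> x) \<partial>lborel)
      \<le> sqrt ((\<integral>x. (\<bar>\<phi> x\<bar> + \<bar>\<psi> x\<bar>) powr r \<partial>lborel) * norm_rr r (\<lambda>x. \<phi> x - \<psi> x))"
    unfolding H_pointwise_eq_sqrt norm_rr_def by (rule CS(2))
  also have "\<dots> \<le> sqrt (4 * (norm_rr r \<phi> + norm_rr r \<psi>) * norm_rr r (\<lambda>x. \<phi> x - \<psi> x))"
    by (intro real_sqrt_le_mono mult_right_mono integral_Lr_add_abs_powr_le[OF assms] norm_rr_nonneg)
  also have "\<dots> = 2 * H r \<phi> \<psi>"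
    by (simp only: H_def mult.assoc real_sqrt_mult) simp
  finally show "(\<integral>x. H_pointwise r (\<phi> x) (\<psi> x) \<partial>lborel) \<le> 2 * H r \<phi> \<psi>" .
qed

lemma norm_rr_le_norm_rr_diff:
  fixes \<phi> \<psi> :: "'a::euclidean_space \<Rightarrow> real"
  assumes "\<phi> \<in> Lr r" "\<psi> \<in> Lr r" "0 < r" "r \<le> 2"
  shows "norm_rr r \<psi> \<le> 4 * (norm_rr r \<phi> + norm_rr r (\<lambda>x. \<phi> x - \<psi> x))"
proof -
  note [measurable] = Lr_measurable[OF assms(1)] Lr_measurable[OF assms(2)]
  have bound: "integrable lborel (\<lambda>x. 4 * (\<bar>\<phi> x\<bar> powr r + \<bar>\<phi> x - \<psi> x\<bar> powr r))"
    using integrable_Lr_powr[OF assms(1)] integrable_Lr_diff_powr[OF assms] by auto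
  have "\<bar>\<psi> x\<bar> powr r \<le> 4 * (\<bar>\<phi> x\<bar> powr r + \<bar>\<phi> x - \<psi> x\<bar> powr r)" for x
  proof -
    have "\<bar>\<psi> x\<bar> powr r \<le> (\<bar>\<phi> x\<bar> + \<bar>\<phi> x - \<psi> x\<bar>) powr r"
      using assms by (intro powr_mono2) auto
    also have "\<dots> \<le> 4 * (\<bar>\<phi> x\<bar> powr r + \<bar>\<phi> x - \<psi> x\<bar> powr r)"
      using assms by (intro add_powr_le) auto
    finally show ?thesis .
  qed
  then have "norm_rr r \<psi> \<le> (\<integral>x. 4 * (\<bar>\<phi> x\<bar> powr r + \<bar>\<phi> x - \<psi> x\<bar> powr r) \<partial>lborel)"
    unfolding norm_rr_def by (rule integral_mono[OF integrable_Lr_powr[OF assms(2)] bound])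
  also have "\<dots> = 4 * (norm_rr r \<phi> + norm_rr r (\<lambda>x. \<phi> x - \<psi> x))"
    using integrable_Lr_powr[OF assms(1)] integrable_Lr_diff_powr[OF assms] by (simp add: norm_rr_def)
  finally show ?thesis .
qed

lemma norm_rr_diff_less_if_Lr_dist_less:
  fixes \<phi> \<psi> :: "'a::euclidean_space \<Rightarrow> real"
  assumes "0 < r" "\<delta> \<le> 1" "Lr_dist r \<phi> \<psi> < \<delta>"
  shows "norm_rr r (\<lambda>x. \<phi> x - \<psi> x) < \<delta>"
proof (cases "r < 1")
  case False
  define N where "N = norm_rr r (\<lambda>x. \<phi> x - \<psi> x)"
  have N: "0 \<le> N" by (simp add: N_def norm_rr_nonneg)
  have less: "N powr (1/r) < \<delta>" using assms False by (simp add: Lr_dist_def N_def)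
  then have \<delta>: "0 < \<delta>" using powr_ge_zero[of N "1/r"] by linarith
  have "N = (N powr (1/r)) powr r" using N assms by (simp add: powr_powr)
  also have "\<dots> < \<delta> powr r" using less assms by (intro powr_less_mono2) auto
  also have "\<dots> \<le> \<delta> powr 1" using \<delta> assms False by (intro powr_mono') auto
  finally show ?thesis using \<delta> by (simp add: N_def)
qed (use assms in \<open>simp add: Lr_dist_def\<close>)

lemma Lr_dist_nonneg: "0 \<le> Lr_dist r \<phi> \<psi>"
  by (simp add: Lr_dist_def norm_rr_nonneg)

lemma H_le_of_Lr_dist_less:
  fixes \<phi> \<psi> :: "'a::euclidean_space \<Rightarrow> real"
  assumes "\<phi> \<in> Lr r" "\<psi> \<in> Lr r" "0 < r" "r \<le> 2" and \<delta>: "\<delta> \<le> 1" "Lr_dist r \<phi> \<psi> < \<delta>"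
  shows "H r \<phi> \<psi> \<le> sqrt (5 * norm_rr r \<phi> + 4) * sqrt \<delta>"
proof -
  define N where "N = norm_rr r (\<lambda>x. \<phi> x - \<psi> x)"
  have N: "0 \<le> N" "N < \<delta>"
    using norm_rr_diff_less_if_Lr_dist_less[OF assms(3) \<delta>] by (auto simp: N_def norm_rr_nonneg)
  have "norm_rr r \<psi> \<le> 4 * (norm_rr r \<phi> + N)"
    unfolding N_def using assms(1-4) by (rule norm_rr_le_norm_rr_diff)
  then have "norm_rr r \<phi> + norm_rr r \<psi> \<le> 5 * norm_rr r \<phi> + 4"
    using N \<delta> by (simp add: algebra_simps)
  then have "H r \<phi> \<psi> \<le> sqrt ((5 * norm_rr r \<phi> + 4) * N)"
    unfolding H_def N_def by (intro real_sqrt_le_mono mult_right_mono norm_rr_nonneg)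
  also have "\<dots> \<le> sqrt ((5 * norm_rr r \<phi> + 4) * \<delta>)"
    using N norm_rr_nonneg[of r \<phi>] by (intro real_sqrt_le_mono mult_left_mono) auto
  finally show ?thesis by (simp add: real_sqrt_mult)
qed

lemma ex_mult_sqrt_less:
  fixes L \<epsilon> :: real
  assumes "0 \<le> L" "0 < \<epsilon>"
  shows "\<exists>\<delta>>0. \<delta> \<le> 1 \<and> L * sqrt \<delta> < \<epsilon>"
proof (intro exI conjI)
  define \<delta> where "\<delta> = min 1 ((\<epsilon> / (L + 1))\<^sup>2)"
  show "0 < \<delta>" "\<delta> \<le> 1" using assms by (auto simp: \<delta>_def)
  have "sqrt \<delta> \<le> sqrt ((\<epsilon> / (L + 1))\<^sup>2)"
    by (simp add: \<delta>_def del: real_sqrt_abs)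
  also have "\<dots> = \<epsilon> / (L + 1)" using assms by simp
  finally have "L * sqrt \<delta> \<le> L * (\<epsilon> / (L + 1))" using assms(1) by (rule mult_left_mono)
  also have "\<dots> < \<epsilon>" using assms by (simp add: field_simps)
  finally show "L * sqrt \<delta> < \<epsilon>" .
qed

section \<open>Functionals of integrands controlled by the gauge\<close>

locale H_pointwise_lipschitz =
  fixes f :: "real \<Rightarrow> complex" and K r1 r2 :: real
  assumes K_nonneg: "0 \<le> K"
    and r1: "0 < r1" "r1 \<le> 2" and r2: "0 < r2" "r2 \<le> 2"
    and f_zero: "f 0 = 0"
    and f_diff_le: "\<And>x y. norm (f x - f y) \<le> K * (H_pointwise r1 x y + H_pointwise r2 x y)"
begin

lemma continuous_on_f: "continuous_on UNIV f"
proof -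
  have "isCont f x" for x
  proof -
    have "((\<lambda>y. H_pointwise r y x) \<longlongrightarrow> 0) (at x)" if "0 < r" for r
    proof -
      have "isCont (\<lambda>y. H_pointwise r y x) x"
        using continuous_on_H_pointwise[OF that] by (simp add: continuous_on_eq_continuous_at)
      then show ?thesis by (simp add: isCont_def)
    qed
    from tendsto_mult[OF tendsto_const tendsto_add[OF this[OF r1(1)] this[OF r2(1)]], of K]
    have "((\<lambda>y. K * (H_pointwise r1 y x + H_pointwise r2 y x)) \<longlongrightarrow> 0) (at x)"
      by simp
    then have "((\<lambda>y. f y - f x) \<longlongrightarrow> 0) (at x)"
      by (rule Lim_null_comparison[rotated]) (use f_diff_le in \<open>auto intro: always_eventually\<close>)
    then show ?thesis by (simp add: isCont_def LIM_zero_iff)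
  qed
  then show ?thesis by (simp add: continuous_on_eq_continuous_at)
qed

lemma integrable_comp:
  fixes \<phi> :: "'a::euclidean_space \<Rightarrow> real"
  assumes \<phi>: "\<phi> \<in> Lr r1 \<inter> Lr r2"
  shows "integrable lborel (\<lambda>x. f (\<phi> x))"
proof (rule Bochner_Integration.integrable_bound)
  show "integrable lborel (\<lambda>x. K * (\<bar>\<phi> x\<bar> powr r1 + \<bar>\<phi> x\<bar> powr r2))"
    using integrable_Lr_powr[of \<phi> r1] integrable_Lr_powr[of \<phi> r2] \<phi> by auto
  show "(\<lambda>x. f (\<phi> x)) \<in> borel_measurable lborel"
    using measurable_compose[OF Lr_measurable borel_measurable_continuous_onI[OF continuous_on_f]] \<phi>
    by auto
  have "norm (f t) \<le> K * (\<bar>t\<bar> powr r1 + \<bar>t\<bar> powr r2)" for t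
    using f_diff_le[of t 0] by (simp add: f_zero H_pointwise_zero_right)
  then show "AE x in lborel. norm (f (\<phi> x)) \<le> norm (K * (\<bar>\<phi> x\<bar> powr r1 + \<bar>\<phi> x\<bar> powr r2))"
    by (intro AE_I2) (auto intro: order_trans[OF _ abs_ge_self])
qed

lemma levy_functional_diff_le:
  fixes \<phi> \<psi> :: "'a::euclidean_space \<Rightarrow> real"
  assumes \<phi>: "\<phi> \<in> Lr r1 \<inter> Lr r2" and \<psi>: "\<psi> \<in> Lr r1 \<inter> Lr r2"
  shows "norm (levy_functional f \<phi> - levy_functional f \<psi>) \<le> 2 * K * H r1 \<phi> \<psi> + 2 * K * H r2 \<phi> \<psi>"
proof -
  define B where "B r x = H_pointwise r (\<phi> x) (\<psi> x)" for r x
  have B: "integrable lborel (B r)" "(\<integral>x. B r x \<partial>lborel) \<le> 2 * H r \<phi> \<psi>" if "r = r1 \<or> r = r2" for r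
    unfolding B_def using that \<phi> \<psi> r1 r2
    by (auto intro!: integrable_H_pointwise integral_H_pointwise_le)
  have "norm (levy_functional f \<phi> - levy_functional f \<psi>) = norm (\<integral>x. f (\<phi> x) - f (\<psi> x) \<partial>lborel)"
    unfolding levy_functional_def using integrable_comp[OF \<phi>] integrable_comp[OF \<psi>] by simp
  also have "\<dots> \<le> (\<integral>x. norm (f (\<phi> x) - f (\<psi> x)) \<partial>lborel)" by (rule integral_norm_bound)
  also have "\<dots> \<le> (\<integral>x. K * (B r1 x + B r2 x) \<partial>lborel)"
  proof (rule integral_mono)
    show "integrable lborel (\<lambda>x. norm (f (\<phi> x) - f (\<psi> x)))"
      using integrable_comp[OF \<phi>] integrable_comp[OF \<psi>] by auto
    show "integrable lborel (\<lambda>x. K * (B r1 x + B r2 x))"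
      using B by auto
    show "norm (f (\<phi> x) - f (\<psi> x)) \<le> K * (B r1 x + B r2 x)" for x
      unfolding B_def by (rule f_diff_le)
  qed
  also have "\<dots> = K * ((\<integral>x. B r1 x \<partial>lborel) + (\<integral>x. B r2 x \<partial>lborel))"
    using B by simp
  also have "\<dots> \<le> K * (2 * H r1 \<phi> \<psi> + 2 * H r2 \<phi> \<psi>)"
    using B K_nonneg by (intro mult_left_mono add_mono) auto
  finally show ?thesis by (simp add: algebra_simps)
qed

lemma levy_functional_continuous:
  fixes \<phi> :: "'a::euclidean_space \<Rightarrow> real"
  assumes \<phi>: "\<phi> \<in> Lr r1 \<inter> Lr r2" and \<epsilon>: "0 < \<epsilon>"
  shows "\<exists>\<delta>>0. \<forall>\<psi> \<in> Lr r1 \<inter> Lr r2. Lr_dist r1 \<phi> \<psi> + Lr_dist r2 \<phi> \<psi> < \<delta> \<longrightarrow>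
           norm (levy_functional f \<psi> - levy_functional f \<phi>) < \<epsilon>"
proof -
  define c where "c r = sqrt (5 * norm_rr r \<phi> + 4)" for r
  define L where "L = 2 * K * (c r1 + c r2)"
  have "0 \<le> L" using K_nonneg by (simp add: L_def c_def norm_rr_nonneg)
  then obtain \<delta> where \<delta>: "0 < \<delta>" "\<delta> \<le> 1" "L * sqrt \<delta> < \<epsilon>"
    using ex_mult_sqrt_less \<epsilon> by blast
  have "norm (levy_functional f \<psi> - levy_functional f \<phi>) < \<epsilon>"
    if \<psi>: "\<psi> \<in> Lr r1 \<inter> Lr r2" and close: "Lr_dist r1 \<phi> \<psi> + Lr_dist r2 \<phi> \<psi> < \<delta>" for \<psi>
  proof -
    have "H r \<phi> \<psi> \<le> c r * sqrt \<delta>" if r: "r = r1 \<or> r = r2" for r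
      unfolding c_def using r r1 r2 \<phi> \<psi> \<delta> close Lr_dist_nonneg[of r1 \<phi> \<psi>] Lr_dist_nonneg[of r2 \<phi> \<psi>]
      by (intro H_le_of_Lr_dist_less) auto
    then have "2 * K * H r1 \<phi> \<psi> + 2 * K * H r2 \<phi> \<psi> \<le> L * sqrt \<delta>"
      using K_nonneg unfolding L_def
      by (simp add: distrib_left distrib_right add_mono mult_left_mono mult.assoc)
    moreover have "norm (levy_functional f \<psi> - levy_functional f \<phi>)
        \<le> 2 * K * H r1 \<phi> \<psi> + 2 * K * H r2 \<phi> \<psi>"
      using levy_functional_diff_le[OF \<phi> \<psi>] by (simp add: norm_minus_commute)
    ultimately show ?thesis using \<delta>(3) by linarith
  qed
  then show ?thesis using \<delta>(1) by blast
qed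

end

section \<open>The L\'evy integrand\<close>

definition levy_integrand :: "real \<Rightarrow> real \<Rightarrow> complex" where
  "levy_integrand \<omega> a = indicator (- {0}) a *\<^sub>R
     (exp (\<i> * complex_of_real (a * \<omega>)) - 1 - \<i> * complex_of_real (\<omega> * a * indicator {a. \<bar>a\<bar> < 1} a))"

definition levy_integrand_even :: "real \<Rightarrow> real \<Rightarrow> complex" where
  "levy_integrand_even \<omega> a = indicator (- {0}) a * complex_of_real (cos (a * \<omega>) - 1)"

definition large_jump_moment :: "real \<Rightarrow> real measure \<Rightarrow> real" where
  "large_jump_moment r V = (\<integral>a. indicator {a. 1 \<le> \<bar>a\<bar>} a * \<bar>a\<bar> powr r \<partial>V)"

definition small_jump_moment :: "real \<Rightarrow> real measure \<Rightarrow> real" where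
  "small_jump_moment r V = (\<integral>a. indicator {a. 0 < \<bar>a\<bar> \<and> \<bar>a\<bar> < 1} a * \<bar>a\<bar> powr r \<partial>V)"

lemma levy_exponent_eq:
  "levy_exponent \<mu> \<sigma>2 V \<omega> =
     \<i> * complex_of_real (\<mu> * \<omega>) - complex_of_real (\<sigma>2 * \<omega>\<^sup>2 / 2) + (\<integral>a. levy_integrand \<omega> a \<partial>V)"
  by (simp add: levy_exponent_def levy_integrand_def)

lemma levy_exponent_zero: "levy_exponent \<mu> \<sigma>2 V 0 = 0"
  by (simp add: levy_exponent_eq levy_integrand_def)

lemma large_jump_moment_nonneg: "0 \<le> large_jump_moment r V"
  unfolding large_jump_moment_def by (intro integral_nonneg_AE) auto

lemma small_jump_moment_nonneg: "0 \<le> small_jump_moment r V"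
  unfolding small_jump_moment_def by (intro integral_nonneg_AE) auto

lemma
  assumes "V \<in> levy_class r1 r2"
  shows integrable_large_jump_weight: "integrable V (\<lambda>a. indicator {a. 1 \<le> \<bar>a\<bar>} a * \<bar>a\<bar> powr r1)"
    and integrable_small_jump_weight:
      "integrable V (\<lambda>a. indicator {a. 0 < \<bar>a\<bar> \<and> \<bar>a\<bar> < 1} a * \<bar>a\<bar> powr r2)"
proof -
  have sets_V: "sets V = sets borel" using assms by (simp add: levy_class_def)
  have "(\<lambda>a. indicator {a. 1 \<le> \<bar>a\<bar>} a * \<bar>a\<bar> powr r1) \<in> borel_measurable V"
    "(\<lambda>a. indicator {a. 0 < \<bar>a\<bar> \<and> \<bar>a\<bar> < 1} a * \<bar>a\<bar> powr r2) \<in> borel_measurable V"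
    unfolding measurable_cong_sets[OF sets_V refl] by measurable
  with assms show "integrable V (\<lambda>a. indicator {a. 1 \<le> \<bar>a\<bar>} a * \<bar>a\<bar> powr r1)"
    "integrable V (\<lambda>a. indicator {a. 0 < \<bar>a\<bar> \<and> \<bar>a\<bar> < 1} a * \<bar>a\<bar> powr r2)"
    by (auto intro!: integrableI_bounded simp: levy_class_def abs_mult)
qed

lemma norm_levy_integrand_le: "norm (levy_integrand \<omega> a) \<le> (2 + \<omega>\<^sup>2) * min 1 (a\<^sup>2)"
proof (cases "\<bar>a\<bar> < 1")
  case True
  have "norm (levy_integrand \<omega> a) \<le> cmod (iexp (a * \<omega>) - 1 - \<i> * complex_of_real (a * \<omega>))"
    using True by (simp add: levy_integrand_def indicator_def mult.commute)
  also have "\<dots> \<le> (a * \<omega>)\<^sup>2 / 2" by (rule cmod_iexp_sub_linear_le)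
  also have "\<dots> \<le> (2 + \<omega>\<^sup>2) * a\<^sup>2" by (simp add: power_mult_distrib algebra_simps)
  finally show ?thesis using True by (simp add: abs_square_less_1)
next
  case False
  then have "1 \<le> \<bar>a\<bar>\<^sup>2" using power_mono[of 1 "\<bar>a\<bar>" 2] by simp
  then have "2 \<le> (2 + \<omega>\<^sup>2) * min 1 (a\<^sup>2)" by simp
  moreover have "norm (levy_integrand \<omega> a) \<le> 2"
    using False cmod_iexp_sub_one_le[of "a * \<omega>"] by (simp add: levy_integrand_def)
  ultimately show ?thesis by linarith
qed

lemma integrable_levy_integrand:
  assumes "levy_measure V"
  shows "integrable V (levy_integrand \<omega>)"
proof (rule Bochner_Integration.integrable_bound)
  have sets_V: "sets V = sets borel" using assms by (simp add: levy_measure_def)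
  have "(\<lambda>a::real. min 1 (a\<^sup>2)) \<in> borel_measurable V"
    unfolding measurable_cong_sets[OF sets_V refl] by measurable
  with assms have "integrable V (\<lambda>a. min 1 (a\<^sup>2))"
    by (intro integrableI_bounded) (auto simp: levy_measure_def)
  then show "integrable V (\<lambda>a. (2 + \<omega>\<^sup>2) * min 1 (a\<^sup>2))" by simp
  show "levy_integrand \<omega> \<in> borel_measurable V"
    unfolding measurable_cong_sets[OF sets_V refl] levy_integrand_def by measurable
  show "AE a in V. norm (levy_integrand \<omega> a) \<le> norm ((2 + \<omega>\<^sup>2) * min 1 (a\<^sup>2))"
    by (intro AE_I2 order_trans[OF norm_levy_integrand_le]) simp
qed

lemma
  fixes g :: "real \<Rightarrow> complex"
  assumes "symmetric_measure V" "sets V = sets borel" "integrable V g"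
  shows integrable_reflect_symmetric: "integrable V (\<lambda>a. g (- a))"
    and integral_reflect_symmetric: "(\<integral>a. g (- a) \<partial>V) = (\<integral>a. g a \<partial>V)"
proof -
  have uminus: "uminus \<in> measurable V borel"
    unfolding measurable_cong_sets[OF assms(2) refl] by measurable
  have g: "g \<in> borel_measurable borel"
    using borel_measurable_integrable[OF assms(3)] measurable_cong_sets[OF assms(2) refl] by blast
  have "distr V borel uminus = V"
  proof (rule measure_eqI)
    fix A assume "A \<in> sets (distr V borel uminus)"
    then have A: "A \<in> sets borel" by simp
    have "uminus -` A \<inter> space V = uminus ` A"
    proof (intro set_eqI iffI)
      fix x assume "x \<in> uminus -` A \<inter> space V"
      then show "x \<in> uminus ` A" by (intro rev_image_eqI[of "- x"]) auto
    qed (use sets_eq_imp_space_eq[OF assms(2)] in auto)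
    then show "emeasure (distr V borel uminus) A = emeasure V A"
      using assms(1) A by (simp add: emeasure_distr[OF uminus A] symmetric_measure_def)
  qed (use assms in simp)
  then show "integrable V (\<lambda>a. g (- a))" "(\<integral>a. g (- a) \<partial>V) = (\<integral>a. g a \<partial>V)"
    using integrable_distr_eq[OF uminus g] integral_distr[OF uminus g] assms(3) by simp_all
qed

lemma levy_integrand_even_eq:
  "levy_integrand_even \<omega> a = (levy_integrand \<omega> a + levy_integrand \<omega> (- a)) / 2"
proof (cases "a = 0")
  case False
  have "complex_of_real (cos (a*\<omega>)) = (exp (\<i> * complex_of_real (a*\<omega>)) + exp (- (\<i> * complex_of_real (a*\<omega>)))) / 2"
    using cos_exp_eq[of "complex_of_real (a*\<omega>)"] by (simp only: cos_of_real)
  moreover have "indicat_real {a. \<bar>a\<bar> < 1} (- a) = indicat_real {a. \<bar>a\<bar> < 1} a"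
    by (simp add: indicator_def)
  ultimately show ?thesis
    using False by (simp add: levy_integrand_even_def levy_integrand_def field_simps)
qed (simp add: levy_integrand_even_def levy_integrand_def)

lemma
  assumes "levy_measure V" "symmetric_measure V"
  shows integrable_levy_integrand_even: "integrable V (levy_integrand_even \<omega>)"
    and integral_levy_integrand_even:
      "(\<integral>a. levy_integrand_even \<omega> a \<partial>V) = (\<integral>a. levy_integrand \<omega> a \<partial>V)"
proof -
  have "sets V = sets borel" using assms(1) by (simp add: levy_measure_def)
  note reflect = integrable_reflect_symmetric[OF assms(2) this integrable_levy_integrand[OF assms(1)]]
    integral_reflect_symmetric[OF assms(2) this integrable_levy_integrand[OF assms(1)]]
  show "integrable V (levy_integrand_even \<omega>)"
    unfolding levy_integrand_even_eq using reflect integrable_levy_integrand[OF assms(1)] by simp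
  show "(\<integral>a. levy_integrand_even \<omega> a \<partial>V) = (\<integral>a. levy_integrand \<omega> a \<partial>V)"
    unfolding levy_integrand_even_eq using reflect integrable_levy_integrand[OF assms(1)] by simp
qed

lemma norm_levy_integrand_diff_large:
  assumes "1 \<le> \<bar>a\<bar>" "0 \<le> r" "r \<le> 1"
  shows "norm (levy_integrand x a - levy_integrand y a) \<le> 4 * \<bar>a\<bar> powr r * H_pointwise r x y"
proof -
  have "norm (levy_integrand x a - levy_integrand y a) = cmod (iexp (a * x) - iexp (a * y))"
    using assms(1) by (simp add: levy_integrand_def)
  also have "\<dots> \<le> 2 * \<bar>a\<bar> powr r * H_pointwise r x y"
    using assms(2,3) by (rule cmod_iexp_diff_le_H_pointwise)
  also have "\<dots> \<le> 4 * \<bar>a\<bar> powr r * H_pointwise r x y"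
    using H_pointwise_nonneg[of r x y] by (intro mult_right_mono) auto
  finally show ?thesis .
qed

lemma norm_levy_integrand_diff_small:
  assumes "0 < \<bar>a\<bar>" "\<bar>a\<bar> < 1" "1 \<le> r" "r \<le> 2"
  shows "norm (levy_integrand x a - levy_integrand y a) \<le> 4 * \<bar>a\<bar> powr r * H_pointwise r x y"
  using assms cmod_iexp_diff_sub_linear_le_H_pointwise[of r a x y]
  by (simp add: levy_integrand_def algebra_simps)

lemma norm_levy_integrand_even_diff:
  assumes "0 \<le> r" "r \<le> 2"
  shows "norm (levy_integrand_even x a - levy_integrand_even y a) \<le> 4 * \<bar>a\<bar> powr r * H_pointwise r x y"
proof -
  have "norm (levy_integrand_even x a - levy_integrand_even y a) \<le> \<bar>cos (a * x) - cos (a * y)\<bar>"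
    by (simp add: levy_integrand_even_def indicator_def flip: of_real_diff)
  also have "\<dots> \<le> 2 * \<bar>a\<bar> powr r * H_pointwise r x y"
    using assms by (rule abs_cos_diff_le_H_pointwise)
  also have "\<dots> \<le> 4 * \<bar>a\<bar> powr r * H_pointwise r x y"
    using H_pointwise_nonneg[of r x y] by (intro mult_right_mono) auto
  finally show ?thesis .
qed

lemma norm_integral_le_jump_moments:
  fixes D :: "real \<Rightarrow> complex"
  assumes V: "V \<in> levy_class r1 r2" and D: "integrable V D" "D 0 = 0"
    and large: "\<And>a. 1 \<le> \<bar>a\<bar> \<Longrightarrow> norm (D a) \<le> 4 * \<bar>a\<bar> powr r1 * B1"
    and small: "\<And>a. 0 < \<bar>a\<bar> \<Longrightarrow> \<bar>a\<bar> < 1 \<Longrightarrow> norm (D a) \<le> 4 * \<bar>a\<bar> powr r2 * B2"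
  shows "norm (\<integral>a. D a \<partial>V) \<le> 4 * (large_jump_moment r1 V * B1 + small_jump_moment r2 V * B2)"
proof -
  define G where "G a = 4 * (indicator {a. 1 \<le> \<bar>a\<bar>} a * \<bar>a\<bar> powr r1 * B1
      + indicator {a. 0 < \<bar>a\<bar> \<and> \<bar>a\<bar> < 1} a * \<bar>a\<bar> powr r2 * B2)" for a :: real
  have G: "integrable V G"
    unfolding G_def using integrable_large_jump_weight[OF V] integrable_small_jump_weight[OF V] by simp
  have "norm (D a) \<le> G a" for a
    using large[of a] small[of a] D(2) by (cases "a = 0") (auto simp: G_def indicator_def)
  then have "norm (\<integral>a. D a \<partial>V) \<le> (\<integral>a. G a \<partial>V)"
    by (intro order_trans[OF integral_norm_bound] integral_mono G) (use D in auto)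
  also have "\<dots> = 4 * (large_jump_moment r1 V * B1 + small_jump_moment r2 V * B2)"
    using integrable_large_jump_weight[OF V] integrable_small_jump_weight[OF V]
    by (simp add: G_def large_jump_moment_def small_jump_moment_def)
  finally show ?thesis .
qed

lemma norm_levy_integral_diff_le:
  assumes V: "levy_measure V" "V \<in> levy_class r1 r2"
    and r: "0 < r1" "r1 \<le> 2" "0 < r2" "r2 \<le> 2"
    and asym: "\<not> symmetric_measure V \<Longrightarrow> r1 \<le> 1 \<and> 1 \<le> r2"
  shows "norm ((\<integral>a. levy_integrand x a \<partial>V) - (\<integral>a. levy_integrand y a \<partial>V))
      \<le> 4 * (large_jump_moment r1 V * H_pointwise r1 x y + small_jump_moment r2 V * H_pointwise r2 x y)"
proof (cases "symmetric_measure V")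
  case True
  note even = integrable_levy_integrand_even[OF V(1) True] integral_levy_integrand_even[OF V(1) True]
  have "(\<integral>a. levy_integrand x a \<partial>V) - (\<integral>a. levy_integrand y a \<partial>V)
      = (\<integral>a. levy_integrand_even x a - levy_integrand_even y a \<partial>V)"
    using even by (simp flip: even(2))
  also have "norm \<dots>
      \<le> 4 * (large_jump_moment r1 V * H_pointwise r1 x y + small_jump_moment r2 V * H_pointwise r2 x y)"
  proof (rule norm_integral_le_jump_moments[OF V(2)])
    show "integrable V (\<lambda>a. levy_integrand_even x a - levy_integrand_even y a)"
      using even(1) by simp
    show "levy_integrand_even x 0 - levy_integrand_even y 0 = 0"
      by (simp add: levy_integrand_even_def)
    show "norm (levy_integrand_even x a - levy_integrand_even y a) \<le> 4 * \<bar>a\<bar> powr r1 * H_pointwise r1 x y"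
      for a using r by (intro norm_levy_integrand_even_diff) auto
    show "norm (levy_integrand_even x a - levy_integrand_even y a) \<le> 4 * \<bar>a\<bar> powr r2 * H_pointwise r2 x y"
      for a using r by (intro norm_levy_integrand_even_diff) auto
  qed
  finally show ?thesis .
next
  case False
  note int = integrable_levy_integrand[OF V(1)]
  have "(\<integral>a. levy_integrand x a \<partial>V) - (\<integral>a. levy_integrand y a \<partial>V)
      = (\<integral>a. levy_integrand x a - levy_integrand y a \<partial>V)"
    using int by simp
  also have "norm \<dots>
      \<le> 4 * (large_jump_moment r1 V * H_pointwise r1 x y + small_jump_moment r2 V * H_pointwise r2 x y)"
  proof (rule norm_integral_le_jump_moments[OF V(2)])
    show "integrable V (\<lambda>a. levy_integrand x a - levy_integrand y a)"
      using int by simp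
    show "levy_integrand x 0 - levy_integrand y 0 = 0"
      by (simp add: levy_integrand_def)
    show "norm (levy_integrand x a - levy_integrand y a) \<le> 4 * \<bar>a\<bar> powr r1 * H_pointwise r1 x y"
      if "1 \<le> \<bar>a\<bar>" for a
      using that r asym[OF False] by (intro norm_levy_integrand_diff_large) auto
    show "norm (levy_integrand x a - levy_integrand y a) \<le> 4 * \<bar>a\<bar> powr r2 * H_pointwise r2 x y"
      if "0 < \<bar>a\<bar>" "\<bar>a\<bar> < 1" for a
      using that r asym[OF False] by (intro norm_levy_integrand_diff_small) auto
  qed
  finally show ?thesis .
qed

context
  fixes p q \<mu> \<sigma>2 :: real and V :: "real measure"
  assumes pq: "0 < p" "p \<le> q" "q \<le> 2"
begin

lemma exps_A_bounds: "r \<in> exps_A p q \<mu> \<sigma>2 V \<Longrightarrow> 0 < r \<and> r \<le> 2"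
  using pq by (auto simp: exps_A_def split: if_splits)

lemma finite_exps_A: "finite (exps_A p q \<mu> \<sigma>2 V)" and exps_A_nonempty: "exps_A p q \<mu> \<sigma>2 V \<noteq> {}"
  by (auto simp: exps_A_def)

lemma p_min_bounds: "0 < p_min p q \<mu> \<sigma>2 V \<and> p_min p q \<mu> \<sigma>2 V \<le> 2"
  unfolding p_min_def using Min_in[OF finite_exps_A exps_A_nonempty] exps_A_bounds by blast

lemma p_max_bounds: "0 < p_max p q \<mu> \<sigma>2 V \<and> p_max p q \<mu> \<sigma>2 V \<le> 2"
  unfolding p_max_def using Max_in[OF finite_exps_A exps_A_nonempty] exps_A_bounds by blast

lemma p_min_le_1_le_p_max:
  assumes "\<mu> \<noteq> 0 \<or> \<not> symmetric_measure V"
  shows "p_min p q \<mu> \<sigma>2 V \<le> 1 \<and> 1 \<le> p_max p q \<mu> \<sigma>2 V"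
proof -
  have "1 \<in> exps_A p q \<mu> \<sigma>2 V" using assms by (auto simp: exps_A_def)
  then show ?thesis unfolding p_min_def p_max_def using finite_exps_A by simp
qed

lemma p_max_eq_2:
  assumes "\<sigma>2 \<noteq> 0"
  shows "p_max p q \<mu> \<sigma>2 V = 2"
proof -
  have "2 \<in> exps_A p q \<mu> \<sigma>2 V" using assms by (auto simp: exps_A_def)
  then show ?thesis using finite_exps_A p_max_bounds by (simp add: p_max_def antisym)
qed

end

lemma levy_exponent_diff_le:
  assumes \<sigma>2: "\<sigma>2 \<ge> 0" and V: "levy_measure V" "V \<in> levy_class r1 r2"
    and r: "0 < r1" "r1 \<le> 2" "0 < r2" "r2 \<le> 2"
    and drift: "\<mu> \<noteq> 0 \<or> \<not> symmetric_measure V \<Longrightarrow> r1 \<le> 1 \<and> 1 \<le> r2"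
    and gauss: "\<sigma>2 \<noteq> 0 \<Longrightarrow> r2 = 2"
  shows "norm (levy_exponent \<mu> \<sigma>2 V x - levy_exponent \<mu> \<sigma>2 V y)
    \<le> (\<bar>\<mu>\<bar> + \<sigma>2 + 4 * (large_jump_moment r1 V + small_jump_moment r2 V))
       * (H_pointwise r1 x y + H_pointwise r2 x y)"
proof -
  define B where "B = H_pointwise r1 x y + H_pointwise r2 x y"
  have B: "H_pointwise r1 x y \<le> B" "H_pointwise r2 x y \<le> B"
    using H_pointwise_nonneg[of r1 x y] H_pointwise_nonneg[of r2 x y] by (auto simp: B_def)
  have drift_le: "\<bar>\<mu>\<bar> * \<bar>x - y\<bar> \<le> \<bar>\<mu>\<bar> * B"
    using drift abs_diff_le_H_pointwise_1[of x y] H_pointwise_le_add[of r1 1 r2 x y]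
    by (cases "\<mu> = 0") (auto simp: B_def intro: mult_left_mono)
  have gauss_le: "\<sigma>2 * (\<bar>x\<^sup>2 - y\<^sup>2\<bar> / 2) \<le> \<sigma>2 * B"
    using gauss abs_diff_square_le_H_pointwise_2[of x y] B(2) \<sigma>2
    by (cases "\<sigma>2 = 0") (auto intro: mult_left_mono)
  have jump_le: "norm ((\<integral>a. levy_integrand x a \<partial>V) - (\<integral>a. levy_integrand y a \<partial>V))
      \<le> 4 * (large_jump_moment r1 V + small_jump_moment r2 V) * B"
  proof -
    have "norm ((\<integral>a. levy_integrand x a \<partial>V) - (\<integral>a. levy_integrand y a \<partial>V))
      \<le> 4 * (large_jump_moment r1 V * H_pointwise r1 x y + small_jump_moment r2 V * H_pointwise r2 x y)"
      using drift by (intro norm_levy_integral_diff_le[OF V r]) auto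
    also have "\<dots> \<le> 4 * (large_jump_moment r1 V * B + small_jump_moment r2 V * B)"
      using B large_jump_moment_nonneg[of r1 V] small_jump_moment_nonneg[of r2 V]
      by (intro mult_left_mono add_mono) auto
    finally show ?thesis by (simp add: algebra_simps)
  qed
  have split: "levy_exponent \<mu> \<sigma>2 V x - levy_exponent \<mu> \<sigma>2 V y
      = \<i> * complex_of_real (\<mu> * (x - y)) - complex_of_real (\<sigma>2 * (x\<^sup>2 - y\<^sup>2) / 2)
        + ((\<integral>a. levy_integrand x a \<partial>V) - (\<integral>a. levy_integrand y a \<partial>V))"
    unfolding levy_exponent_eq by (simp add: field_simps)
  have "norm (levy_exponent \<mu> \<sigma>2 V x - levy_exponent \<mu> \<sigma>2 V y)
      \<le> norm (\<i> * complex_of_real (\<mu> * (x - y))) + norm (complex_of_real (\<sigma>2 * (x\<^sup>2 - y\<^sup>2) / 2))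
        + norm ((\<integral>a. levy_integrand x a \<partial>V) - (\<integral>a. levy_integrand y a \<partial>V))"
    unfolding split by (rule order_trans[OF norm_triangle_ineq add_right_mono[OF norm_triangle_ineq4]])
  also have "\<dots> = \<bar>\<mu>\<bar> * \<bar>x - y\<bar> + \<sigma>2 * (\<bar>x\<^sup>2 - y\<^sup>2\<bar> / 2)
        + norm ((\<integral>a. levy_integrand x a \<partial>V) - (\<integral>a. levy_integrand y a \<partial>V))"
    using \<sigma>2 by (simp only: norm_mult norm_of_real norm_ii) (simp add: abs_mult)
  also have "\<dots> \<le> \<bar>\<mu>\<bar> * B + \<sigma>2 * B + 4 * (large_jump_moment r1 V + small_jump_moment r2 V) * B"
    using drift_le gauss_le jump_le by (intro add_mono)
  finally show ?thesis by (simp add: B_def algebra_simps)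
qed

theorem proposition3p15:
  fixes \<mu> \<sigma>2 p q :: real and V :: "real measure"
  assumes "\<sigma>2 \<ge> 0" and "levy_measure V"
    and "0 < p" and "p \<le> q" and "q \<le> 2"
    and "V \<in> levy_class (p_min p q \<mu> \<sigma>2 V) (p_max p q \<mu> \<sigma>2 V)"
  defines "f \<equiv> levy_exponent \<mu> \<sigma>2 V"
    and "pmin \<equiv> p_min p q \<mu> \<sigma>2 V" and "pmax \<equiv> p_max p q \<mu> \<sigma>2 V"
  shows "(\<forall>\<phi>::'a::euclidean_space \<Rightarrow> real \<in> Lr pmin \<inter> Lr pmax. integrable lborel (\<lambda>r. f (\<phi> r)))
     \<and> (\<exists>\<nu>1 \<nu>2. \<nu>1 \<ge> 0 \<and> \<nu>2 \<ge> 0 \<and>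
          (\<forall>\<phi>::'a::euclidean_space \<Rightarrow> real \<in> Lr pmin \<inter> Lr pmax. \<forall>\<psi>::'a \<Rightarrow> real \<in> Lr pmin \<inter> Lr pmax.
             norm (levy_functional f \<phi> - levy_functional f \<psi>)
               \<le> \<nu>1 * H pmin \<phi> \<psi> + \<nu>2 * H pmax \<phi> \<psi>))
     \<and> (\<forall>\<phi>::'a::euclidean_space \<Rightarrow> real \<in> Lr pmin \<inter> Lr pmax. \<forall>\<epsilon>>0. \<exists>\<delta>>0. \<forall>\<psi>::'a \<Rightarrow> real \<in> Lr pmin \<inter> Lr pmax.
          Lr_dist pmin \<phi> \<psi> + Lr_dist pmax \<phi> \<psi> < \<delta> \<longrightarrow>
          norm (levy_functional f \<psi> - levy_functional f \<phi>) < \<epsilon>)"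
proof -
  define K where "K = \<bar>\<mu>\<bar> + \<sigma>2 + 4 * (large_jump_moment pmin V + small_jump_moment pmax V)"
  have pmin: "0 < pmin" "pmin \<le> 2" and pmax: "0 < pmax" "pmax \<le> 2"
    using p_min_bounds[OF assms(3-5)] p_max_bounds[OF assms(3-5)] by (auto simp: pmin_def pmax_def)
  interpret H_pointwise_lipschitz f K pmin pmax
  proof
    show "0 \<le> K"
      using assms(1) large_jump_moment_nonneg small_jump_moment_nonneg by (simp add: K_def)
    have V: "V \<in> levy_class pmin pmax" using assms(6) by (simp add: pmin_def pmax_def)
    have drift: "\<mu> \<noteq> 0 \<or> \<not> symmetric_measure V \<Longrightarrow> pmin \<le> 1 \<and> 1 \<le> pmax"
      using p_min_le_1_le_p_max[OF assms(3-5)] by (simp add: pmin_def pmax_def)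
    have gauss: "\<sigma>2 \<noteq> 0 \<Longrightarrow> pmax = 2"
      using p_max_eq_2[OF assms(3-5)] by (simp add: pmax_def)
    show "norm (f x - f y) \<le> K * (H_pointwise pmin x y + H_pointwise pmax x y)" for x y
      unfolding f_def K_def by (rule levy_exponent_diff_le[OF assms(1,2) V pmin pmax drift gauss])
  qed (use pmin pmax in \<open>simp_all add: f_def levy_exponent_zero\<close>)
  have "0 \<le> 2 * K" using K_nonneg by simp
  then show ?thesis
    using integrable_comp levy_functional_diff_le levy_functional_continuous by blast
qed

end
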